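(* Let $A=\mathbb{F}_2(\mathbb{Z}_3)$ with calculus as in the context. Then the element $$g_B=(1+y)\,\omega^1\otimes\omega^1+(1+x+y)(\omega^1\otimes\omega^2+\omega^2\otimes\omega^1)+(1+x)\,\omega^2\otimes\omega^2$$ is the unique invertible, central, quantum symmetric metric. It admits exactly four QLCs; three of them are flat and the fourth has curvature $R_\nabla\eta=\mathrm{Vol}\otimes\eta$ for all $\eta\in\Omega^1$. The quantum dimension $(\ ,\ )(g_B)$ is $0$, and for each of the four QLCs the Laplacian $\Delta$ is identically zero.
   Context: Algebra B: $A$ is the commutative algebra over $\mathbb{F}_2$ with basis $1,x,y$ and $x^2=x$, $y^2=y$, $xy=0$ (the functions on $\mathbb{Z}_3$). $\Omega^1$ is the universal calculus, free as a left module on $\omega^1=\mathrm{d}x$, $\omega^2=\mathrm{d}y$, with $\omega^1x=(1+x)\omega^1$, $\omega^1y=x\omega^2$, $\omega^2x=y\omega^1$, $\omega^2y=(1+y)\omega^2$. $\Omega^2=A\,\mathrm{Vol}$ free of rank one with central basis $\mathrm{Vol}$, $\omega^1\wedge\omega^1=(1+x)\mathrm{Vol}$, $\omega^1\wedge\omega^2=\omega^2\wedge\omega^1=(x+y)\mathrm{Vol}$, $\omega^2\wedge\omega^2=(1+y)\mathrm{Vol}$, $\mathrm{d}\omega^i=0$. Definitions: $g\in\Omega^1\otimes_A\Omega^1$ is central if $ag=ga$ for all $a$; quantum symmetric if $\wedge(g)=0$; an invertible metric if there is a bimodule map $(\ ,\ ):\Omega^1\otimes_A\Omega^1\to A$ with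 $((\eta,\ )\otimes\mathrm{id})g=\eta=(\mathrm{id}\otimes(\ ,\eta))g$ for all $\eta$. A QLC for $g$ is a bimodule connection ($\nabla(a\omega)=a\nabla\omega+\mathrm{d}a\otimes\omega$, $\nabla(\omega a)=(\nabla\omega)a+\sigma(\omega\otimes\mathrm{d}a)$ for a bimodule map $\sigma$) which is torsion free ($\wedge\nabla=\mathrm{d}$ on $\Omega^1$) and metric compatible ($(\nabla\otimes\mathrm{id})g+(\sigma\otimes\mathrm{id})(\mathrm{id}\otimes\nabla)g=0$). Curvature $R_\nabla=(\mathrm{d}\otimes\mathrm{id}-\mathrm{id}\wedge\nabla)\nabla$; flat means $R_\nabla=0$. Laplacian $\Delta=(\ ,\ )\nabla\mathrm{d}:A\to A$; quantum dimension $(\ ,\ )(g)$. *)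

theory Defs
  imports Main "HOL-Library.Z2" "HOL-Library.Function_Algebras"
begin

text \<open>An element  A a0 a1 a2  stands for  a0*1 + a1*x + a2*y  with coefficients in F_2
  (the type bit), multiplication determined by  x^2 = x, y^2 = y, xy = yx = 0.\<close>

datatype A = A bit bit bit

fun c0 :: "A \<Rightarrow> bit" where "c0 (A a b c) = a"
fun c1 :: "A \<Rightarrow> bit" where "c1 (A a b c) = b"
fun c2 :: "A \<Rightarrow> bit" where "c2 (A a b c) = c"

lemma A_eq_iff: "u = v \<longleftrightarrow> c0 u = c0 v \<and> c1 u = c1 v \<and> c2 u = c2 v"
  by (cases u; cases v) auto

instantiation A :: comm_ring_1
begin
definition "zero_A = A 0 0 0"
definition "one_A = A 1 0 0"
definition "plus_A u v = A (c0 u + c0 v) (c1 u + c1 v) (c2 u + c2 v)"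
definition "uminus_A u = A (- c0 u) (- c1 u) (- c2 u)"
definition "minus_A u v = A (c0 u - c0 v) (c1 u - c1 v) (c2 u - c2 v)"
definition "times_A u v = A (c0 u * c0 v)
     (c0 u * c1 v + c1 u * c0 v + c1 u * c1 v)
     (c0 u * c2 v + c2 u * c0 v + c2 u * c2 v)"
instance
  apply standard
  apply (simp_all only: A_eq_iff zero_A_def one_A_def plus_A_def uminus_A_def
      minus_A_def times_A_def c0.simps c1.simps c2.simps)
  apply (algebra | simp)+
  done
end

definition xA :: A where "xA = A 0 1 0"
definition yA :: A where "yA = A 0 0 1"
definition sc :: "bit \<Rightarrow> A" where "sc b = A b 0 0"

section \<open>One-forms: free left module on omega^1 = dx, omega^2 = dy\<close>

datatype ix = I1 | I2

lemma UNIV_ix: "(UNIV :: ix set) = {I1, I2}"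
  using ix.exhaust by auto

instance ix :: finite
  by standard (simp add: UNIV_ix)

text \<open>An element of Omega^1 is its coefficient vector w.r.t. the left basis omega^1, omega^2.\<close>
type_synonym Om1 = "ix \<Rightarrow> A"
text \<open>An element of Omega^1 (x)_A Omega^1 is its coefficient matrix t i j w.r.t. the
  left basis omega^i (x) omega^j.\<close>
type_synonym T2 = "ix \<Rightarrow> ix \<Rightarrow> A"
text \<open>Omega^2 = A Vol is represented by the coefficient of Vol (type A).\<close>

definition e :: "ix \<Rightarrow> Om1" where "e i = (\<lambda>k. if k = i then 1 else 0)"

definition lmul :: "A \<Rightarrow> Om1 \<Rightarrow> Om1" where "lmul a w = (\<lambda>k. a * w k)"

text \<open>The bimodule relations: omega^i x and omega^i y.\<close>
fun om_x :: "ix \<Rightarrow> Om1" where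
  "om_x I1 = lmul (1 + xA) (e I1)"
| "om_x I2 = lmul yA (e I1)"
fun om_y :: "ix \<Rightarrow> Om1" where
  "om_y I1 = lmul xA (e I2)"
| "om_y I2 = lmul (1 + yA) (e I2)"

text \<open>omega^i a for a = a0 + a1 x + a2 y.\<close>
definition gen_r :: "ix \<Rightarrow> A \<Rightarrow> Om1" where
  "gen_r i a = lmul (sc (c0 a)) (e i) + lmul (sc (c1 a)) (om_x i) + lmul (sc (c2 a)) (om_y i)"

definition rmul :: "Om1 \<Rightarrow> A \<Rightarrow> Om1" where
  "rmul w a = (\<lambda>k. \<Sum>i\<in>UNIV. w i * gen_r i a k)"

definition d0 :: "A \<Rightarrow> Om1" where
  "d0 a = (\<lambda>i. case i of I1 \<Rightarrow> sc (c1 a) | I2 \<Rightarrow> sc (c2 a))"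

text \<open>alpha (x)_A beta in coordinates: alpha_i omega^i (x) beta_j omega^j = alpha_i (omega^i beta_j) (x) omega^j.\<close>
definition tens :: "Om1 \<Rightarrow> Om1 \<Rightarrow> T2" where
  "tens \<alpha> \<beta> = (\<lambda>k j. \<Sum>i\<in>UNIV. \<alpha> i * gen_r i (\<beta> j) k)"

definition lmulT :: "A \<Rightarrow> T2 \<Rightarrow> T2" where "lmulT a t = (\<lambda>i j. a * t i j)"

definition rmulT :: "T2 \<Rightarrow> A \<Rightarrow> T2" where
  "rmulT t a = (\<Sum>i\<in>UNIV. \<Sum>j\<in>UNIV. lmulT (t i j) (tens (e i) (rmul (e j) a)))"

text \<open>omega^i wedge omega^j = W i j Vol.\<close>
fun W :: "ix \<Rightarrow> ix \<Rightarrow> A" where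
  "W I1 I1 = 1 + xA"
| "W I1 I2 = xA + yA"
| "W I2 I1 = xA + yA"
| "W I2 I2 = 1 + yA"

definition wedgeT :: "T2 \<Rightarrow> A" where
  "wedgeT t = (\<Sum>i\<in>UNIV. \<Sum>j\<in>UNIV. t i j * W i j)"

definition wedge :: "Om1 \<Rightarrow> Om1 \<Rightarrow> A" where "wedge \<alpha> \<beta> = wedgeT (tens \<alpha> \<beta>)"

text \<open>d on one-forms, using d omega^i = 0: d(a_i omega^i) = da_i wedge omega^i.\<close>
definition d1 :: "Om1 \<Rightarrow> A" where
  "d1 w = (\<Sum>i\<in>UNIV. wedge (d0 (w i)) (e i))"

text \<open>Column of a 2-tensor: t = sum_l (col t l) (x) omega^l.\<close>
definition col :: "T2 \<Rightarrow> ix \<Rightarrow> Om1" where "col t l = (\<lambda>k. t k l)"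

definition central :: "T2 \<Rightarrow> bool" where
  "central g \<longleftrightarrow> (\<forall>a. lmulT a g = rmulT g a)"

definition quantum_symmetric :: "T2 \<Rightarrow> bool" where
  "quantum_symmetric g \<longleftrightarrow> wedgeT g = 0"

definition bimodule_map_A :: "(T2 \<Rightarrow> A) \<Rightarrow> bool" where
  "bimodule_map_A ip \<longleftrightarrow> (\<forall>s t. ip (s + t) = ip s + ip t)
     \<and> (\<forall>a t. ip (lmulT a t) = a * ip t) \<and> (\<forall>a t. ip (rmulT t a) = ip t * a)"

text \<open>ip is an inverse of g:  ((eta, ) (x) id) g = eta = (id (x) ( , eta)) g.\<close>
definition inverse_of :: "T2 \<Rightarrow> (T2 \<Rightarrow> A) \<Rightarrow> bool" where
  "inverse_of g ip \<longleftrightarrow> bimodule_map_A ip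
     \<and> (\<forall>\<eta>. (\<lambda>j. \<Sum>i\<in>UNIV. ip (tens \<eta> (lmul (g i j) (e i)))) = \<eta>)
     \<and> (\<forall>\<eta>. (\<Sum>i\<in>UNIV. \<Sum>j\<in>UNIV. lmul (g i j) (rmul (e i) (ip (tens (e j) \<eta>)))) = \<eta>)"

definition invertible_metric :: "T2 \<Rightarrow> bool" where
  "invertible_metric g \<longleftrightarrow> (\<exists>ip. inverse_of g ip)"

definition bimodule_map_T :: "(T2 \<Rightarrow> T2) \<Rightarrow> bool" where
  "bimodule_map_T s \<longleftrightarrow> (\<forall>t u. s (t + u) = s t + s u)
     \<and> (\<forall>a t. s (lmulT a t) = lmulT a (s t)) \<and> (\<forall>a t. s (rmulT t a) = rmulT (s t) a)"

definition bimodule_connection :: "(Om1 \<Rightarrow> T2) \<Rightarrow> (T2 \<Rightarrow> T2) \<Rightarrow> bool" where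
  "bimodule_connection nab sig \<longleftrightarrow>
     (\<forall>w v. nab (w + v) = nab w + nab v)
   \<and> (\<forall>a w. nab (lmul a w) = lmulT a (nab w) + tens (d0 a) w)
   \<and> bimodule_map_T sig
   \<and> (\<forall>a w. nab (rmul w a) = rmulT (nab w) a + sig (tens w (d0 a)))"

definition torsion_free :: "(Om1 \<Rightarrow> T2) \<Rightarrow> bool" where
  "torsion_free nab \<longleftrightarrow> (\<forall>w. wedgeT (nab w) = d1 w)"

text \<open>Omega^1 (x) Omega^1 (x) Omega^1 is represented as l |-> (element of T2), meaning
  sum_l z_l (x) omega^l. Characteristic 2: minus = plus.
  Slot l of (nabla (x) id) g is nab (col g l); slot l of (id (x) nabla) g is
  sum_ij (g_ij omega^i) (x) col (nab omega^j) l.\<close>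
definition metric_compatible :: "T2 \<Rightarrow> (Om1 \<Rightarrow> T2) \<Rightarrow> (T2 \<Rightarrow> T2) \<Rightarrow> bool" where
  "metric_compatible g nab sig \<longleftrightarrow> (\<forall>l.
     nab (col g l) + sig (\<Sum>i\<in>UNIV. \<Sum>j\<in>UNIV. tens (lmul (g i j) (e i)) (col (nab (e j)) l)) = 0)"

definition QLC :: "T2 \<Rightarrow> ((Om1 \<Rightarrow> T2) \<times> (T2 \<Rightarrow> T2)) set" where
  "QLC g = {(nab, sig). bimodule_connection nab sig \<and> torsion_free nab \<and> metric_compatible g nab sig}"

text \<open>Omega^2 (x)_A Omega^1 = A Vol (x) Omega^1 is identified with Omega^1 via
  sum_m c_m Vol (x) omega^m  |->  (c_m)_m;  so  Vol (x) eta  corresponds to  eta.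
  Curvature R = (d (x) id - id wedge nabla) nabla, in char 2.\<close>
definition curvature :: "(Om1 \<Rightarrow> T2) \<Rightarrow> Om1 \<Rightarrow> Om1" where
  "curvature nab w = (\<lambda>m. d1 (col (nab w) m)
      + (\<Sum>j\<in>UNIV. wedge (col (nab w) j) (col (nab (e j)) m)))"

definition laplacian :: "(T2 \<Rightarrow> A) \<Rightarrow> (Om1 \<Rightarrow> T2) \<Rightarrow> A \<Rightarrow> A" where
  "laplacian ip nab a = ip (nab (d0 a))"

fun gB :: T2 where
  "gB I1 I1 = 1 + yA"
| "gB I1 I2 = 1 + xA + yA"
| "gB I2 I1 = 1 + xA + yA"
| "gB I2 I2 = 1 + xA"

end

theory Submission
  imports Defs
begin

text \<open>In the basis of delta functions at the three points of \<open>\<int>\<^sub>3\<close>, the algebra \<open>A\<close> is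
  \<open>F\<^sub>2\<^sup>3\<close> with pointwise operations, so every condition in the theorem becomes a system of
  polynomial equations over \<open>F\<^sub>2\<close> in finitely many unknowns.
  Centrality cuts a metric down to six parameters, quantum symmetry to three, and the first
  inverse condition forces all three to be \<open>1\<close>; the second inverse condition determines the
  inverse metric. A bimodule connection is determined by the tensors \<open>N\<^sub>i = \<nabla>\<omega>\<^sup>i\<close> (left
  Leibniz rule), and so is its braiding \<open>\<sigma>\<close> (right Leibniz rule applied to \<open>\<omega>\<^sup>i x\<close> and
  \<open>\<omega>\<^sup>i y\<close>). Since \<open>d\<omega>\<^sup>i = 0\<close>, torsion freeness says \<open>\<wedge>N\<^sub>i = 0\<close>, and metric compatibility
  then has exactly four solutions.\<close>

section \<open>Arithmetic in A\<close>

lemma bit_add_self: "(x::bit) + x = 0" "(x::bit) + (x + y) = y"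
  by (cases x; simp)+

lemma bit_mult_self: "(x::bit) * x = x" "(x::bit) * (x * y) = x * y"
  by (cases x; simp)+

lemma bit_zero_one_eq: "(0::bit) = 1 \<longleftrightarrow> False" "(1::bit) = 0 \<longleftrightarrow> False"
  by simp_all

lemma bit_add_eq_iff: "a + b = c \<longleftrightarrow> a = b + c" for a b c :: bit
  by (cases a; cases b; cases c; simp)

lemma bit_mult_eq_1_iff: "a * b = 1 \<longleftrightarrow> a = 1 \<and> b = 1" for a b :: bit
  by (cases a; cases b; simp)

text \<open>The library simp rule \<open>add_bit_eq_xor\<close> turns \<open>+\<close> on \<open>bit\<close> into \<open>xor\<close>, which these
  normalising rules cannot handle; hence the frequent use of \<open>simp only\<close>.\<close>
lemmas bit_simps = algebra_simps bit_add_self bit_mult_self mult_1_left mult_1_right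
  add_0_left add_0_right mult_zero_left mult_zero_right one_add_one bit_2_eq_0 bit_zero_one_eq

text \<open>\<open>vals u v w\<close> is the function on \<open>\<int>\<^sub>3\<close> with values \<open>u, v, w\<close> at the points where
  \<open>x = y = 0\<close>, \<open>x = 1\<close> and \<open>y = 1\<close>, i.e. \<open>u(1 + x + y) + v x + w y\<close>.\<close>
definition vals :: "bit \<Rightarrow> bit \<Rightarrow> bit \<Rightarrow> A" where
  "vals u v w = A u (u + v) (u + w)"

lemma vals_eq_iff [simp]: "vals u v w = vals u' v' w' \<longleftrightarrow> u = u' \<and> v = v' \<and> w = w'"
  by (auto simp: vals_def)

lemma vals_add [simp]: "vals u v w + vals u' v' w' = vals (u + u') (v + v') (w + w')"
  unfolding vals_def plus_A_def by (simp only: c0.simps c1.simps c2.simps A.inject simp_thms bit_simps)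

lemma vals_mult [simp]: "vals u v w * vals u' v' w' = vals (u * u') (v * v') (w * w')"
  unfolding vals_def times_A_def by (simp only: c0.simps c1.simps c2.simps A.inject simp_thms bit_simps)

lemma vals_coeffs [simp]: "c0 (vals u v w) = u" "c1 (vals u v w) = u + v" "c2 (vals u v w) = u + w"
  unfolding vals_def by simp_all

lemma vals_consts: "0 = vals 0 0 0" "1 = vals 1 1 1" "xA = vals 0 1 0" "yA = vals 0 0 1"
    "sc b = vals b b b"
  by (simp_all add: vals_def zero_A_def one_A_def xA_def yA_def sc_def)

lemma vals_cases [cases type: A]: obtains u v w where "a = vals u v w"
proof
  show "a = vals (c0 a) (c0 a + c1 a) (c0 a + c2 a)"
    by (cases a) (simp only: vals_def bit_simps c0.simps c1.simps c2.simps)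
qed

lemma A_add_self [simp]: "(a::A) + a = 0"
  by (cases a) (simp add: vals_consts bit_add_self)

text \<open>One-forms and two-tensors are written in coordinates as \<open>case_ix a b\<close> and \<open>mat2 a b c d\<close>
  (coefficients of \<open>\<omega>\<^sup>1\<otimes>\<omega>\<^sup>1, \<omega>\<^sup>1\<otimes>\<omega>\<^sup>2, \<omega>\<^sup>2\<otimes>\<omega>\<^sup>1, \<omega>\<^sup>2\<otimes>\<omega>\<^sup>2\<close>).\<close>
abbreviation mat2 :: "'a \<Rightarrow> 'a \<Rightarrow> 'a \<Rightarrow> 'a \<Rightarrow> ix \<Rightarrow> ix \<Rightarrow> 'a" where
  "mat2 a b c d \<equiv> case_ix (case_ix a b) (case_ix c d)"

lemma case_ix_eta: "f = case_ix (f I1) (f I2)"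
  by (rule ext) (simp split: ix.split)

lemma case_ix_eq_iff [simp]: "case_ix a b = case_ix a' b' \<longleftrightarrow> a = a' \<and> b = b'"
  by (metis ix.case)

lemma case_ix_add [simp]: "case_ix a b + case_ix a' b' = case_ix (a + a') (b + b')"
  by (rule ext) (simp split: ix.split)

lemma ix_fun_eq_iff: "f = g \<longleftrightarrow> f I1 = g I1 \<and> f I2 = g I2"
  by (metis case_ix_eta)

lemma sum_UNIV_ix: "(\<Sum>i\<in>UNIV. f i) = f I1 + f I2"
  by (simp add: UNIV_ix)

lemma all_ix: "(\<forall>i. Q i) \<longleftrightarrow> Q I1 \<and> Q I2"
  by (metis ix.exhaust)

lemma zero_ix_fun: "(0 :: ix \<Rightarrow> 'a::zero) = case_ix 0 0"
  by (subst case_ix_eta) simp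

lemma T2_cases: obtains p1 p2 p3 q1 q2 q3 r1 r2 r3 s1 s2 s3 where
  "t = mat2 (vals p1 p2 p3) (vals q1 q2 q3) (vals r1 r2 r3) (vals s1 s2 s3)"
  by (metis case_ix_eta vals_cases)

lemma Om1_cases: obtains u v w u' v' w' where "\<eta> = case_ix (vals u v w) (vals u' v' w')"
  by (metis case_ix_eta vals_cases)

lemma e_case: "e I1 = case_ix 1 0" "e I2 = case_ix 0 1"
  by (subst case_ix_eta; simp add: e_def)+

lemma lmul_case [simp]: "lmul a (case_ix b c) = case_ix (a * b) (a * c)"
  by (simp add: lmul_def ix_fun_eq_iff)

lemma lmulT_mat2 [simp]: "lmulT a (mat2 b c b' c') = mat2 (a * b) (a * c) (a * b') (a * c')"
  by (simp add: lmulT_def ix_fun_eq_iff)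

lemma gen_r_vals:
  "gen_r I1 (vals u v w) = case_ix (vals v u v) (vals 0 (u + w) 0)"
  "gen_r I2 (vals u v w) = case_ix (vals 0 0 (u + v)) (vals w w u)"
  by (simp_all add: gen_r_def e_case vals_consts bit_simps)

lemma d0_vals: "d0 (vals u v w) = case_ix (vals (u + v) (u + v) (u + v)) (vals (u + w) (u + w) (u + w))"
  by (subst case_ix_eta) (simp add: d0_def vals_consts)

lemma tens_case: "tens (case_ix a b) (case_ix c d) =
   mat2 (a * gen_r I1 c I1 + b * gen_r I2 c I1) (a * gen_r I1 d I1 + b * gen_r I2 d I1)
        (a * gen_r I1 c I2 + b * gen_r I2 c I2) (a * gen_r I1 d I2 + b * gen_r I2 d I2)"
  by (simp add: tens_def sum_UNIV_ix ix_fun_eq_iff)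

lemma rmul_case: "rmul (case_ix a b) c = lmul a (gen_r I1 c) + lmul b (gen_r I2 c)"
  by (simp add: rmul_def lmul_def sum_UNIV_ix plus_fun_def)

lemma rmulT_mat2: "rmulT (mat2 a b a' b') c =
     lmulT a (tens (e I1) (rmul (e I1) c)) + lmulT b (tens (e I1) (rmul (e I2) c))
   + lmulT a' (tens (e I2) (rmul (e I1) c)) + lmulT b' (tens (e I2) (rmul (e I2) c))"
  by (simp add: rmulT_def sum_UNIV_ix add.assoc)

lemma wedgeT_mat2: "wedgeT (mat2 a b a' b') =
    a * vals 1 0 1 + b * vals 0 1 1 + a' * vals 0 1 1 + b' * vals 1 1 0"
  by (simp add: wedgeT_def sum_UNIV_ix vals_consts add.assoc)

lemma col_mat2: "col (mat2 a b a' b') I1 = case_ix a a'" "col (mat2 a b a' b') I2 = case_ix b b'"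
  by (simp_all add: col_def ix_fun_eq_iff)

lemma d1_case: "d1 (case_ix a b) = wedgeT (tens (d0 a) (e I1)) + wedgeT (tens (d0 b) (e I2))"
  by (simp add: d1_def wedge_def sum_UNIV_ix)

lemma gB_mat2: "gB = mat2 (vals 1 1 0) (vals 1 0 0) (vals 1 0 0) (vals 1 0 1)"
  by (simp add: ix_fun_eq_iff vals_consts)

lemmas coord_simps = e_case lmul_case lmulT_mat2 gen_r_vals d0_vals tens_case rmul_case rmulT_mat2
  wedgeT_mat2 col_mat2 d1_case ix.case case_ix_add case_ix_eq_iff vals_eq_iff vals_add vals_mult
  vals_consts gB_mat2 zero_ix_fun bit_simps simp_thms

section \<open>The metric\<close>

lemma wedgeT_mat2_eq_0_iff:
  "wedgeT (mat2 (vals p1 p2 p3) (vals q1 q2 q3) (vals r1 r2 r3) (vals s1 s2 s3)) = 0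
   \<longleftrightarrow> s1 = p1 \<and> r2 = q2 + s2 \<and> r3 = p3 + q3"
  by (simp only: coord_simps) (auto simp del: add_bit_eq_xor simp: bit_add_eq_iff)

definition central_tensor :: "bit \<Rightarrow> bit \<Rightarrow> bit \<Rightarrow> bit \<Rightarrow> bit \<Rightarrow> bit \<Rightarrow> T2" where
  "central_tensor a b c a' b' c' = mat2 (vals a b 0) (vals a 0 c) (vals a' b' 0) (vals a' 0 c')"

lemma central_iff: "central g \<longleftrightarrow> (\<exists>a b c a' b' c'. g = central_tensor a b c a' b' c')"
proof
  assume "central g"
  then have cx: "lmulT xA g = rmulT g xA" and cy: "lmulT yA g = rmulT g yA"
    unfolding central_def by blast+
  obtain p1 p2 p3 q1 q2 q3 r1 r2 r3 s1 s2 s3 where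
    g: "g = mat2 (vals p1 p2 p3) (vals q1 q2 q3) (vals r1 r2 r3) (vals s1 s2 s3)"
    by (rule T2_cases)
  have "p3 = 0 \<and> q1 = p1 \<and> q2 = 0 \<and> r3 = 0 \<and> s1 = r1 \<and> s2 = 0"
    using cx cy unfolding g
    by (simp only: coord_simps) (auto simp del: add_bit_eq_xor simp: bit_add_eq_iff)
  then show "\<exists>a b c a' b' c'. g = central_tensor a b c a' b' c'"
    unfolding g central_tensor_def by auto
next
  assume "\<exists>a b c a' b' c'. g = central_tensor a b c a' b' c'"
  then obtain a b c a' b' c' where g: "g = central_tensor a b c a' b' c'"
    by blast
  show "central g"
    unfolding central_def
  proof
    fix r
    show "lmulT r g = rmulT g r"
      unfolding g central_tensor_def by (cases r) (simp only: coord_simps)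
  qed
qed

lemma wedgeT_central_tensor_eq_0_iff:
  "wedgeT (central_tensor a b c a' b' c') = 0 \<longleftrightarrow> a' = a \<and> b' = 0 \<and> c = 0"
  unfolding central_tensor_def wedgeT_mat2_eq_0_iff
  by (auto simp del: add_bit_eq_xor simp: bit_add_eq_iff)

lemma central_gB: "central gB"
  unfolding central_iff central_tensor_def by (auto simp: gB_mat2)

lemma quantum_symmetric_gB: "quantum_symmetric gB"
  unfolding quantum_symmetric_def by (simp only: coord_simps)

definition ip_of :: "T2 \<Rightarrow> T2 \<Rightarrow> A" where
  "ip_of G t = (\<Sum>i\<in>UNIV. \<Sum>j\<in>UNIV. t i j * G i j)"

lemma T2_decompose: "t = (\<Sum>i\<in>UNIV. \<Sum>j\<in>UNIV. lmulT (t i j) (tens (e i) (e j)))"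
  by (cases t rule: T2_cases) (simp only: sum_UNIV_ix coord_simps)

lemma bimodule_map_A_eq_ip_of:
  assumes "bimodule_map_A ip"
  shows "ip = ip_of (\<lambda>i j. ip (tens (e i) (e j)))"
proof
  fix t
  have add: "\<And>s u. ip (s + u) = ip s + ip u" and lin: "\<And>a u. ip (lmulT a u) = a * ip u"
    using assms unfolding bimodule_map_A_def by blast+
  have "ip t = ip (\<Sum>i\<in>UNIV. \<Sum>j\<in>UNIV. lmulT (t i j) (tens (e i) (e j)))"
    by (simp only: T2_decompose[of t, symmetric])
  then show "ip t = ip_of (\<lambda>i j. ip (tens (e i) (e j))) t"
    by (simp only: sum_UNIV_ix add lin ip_of_def)
qed

lemma bimodule_map_A_cases:
  assumes "bimodule_map_A ip"
  obtains p1 p2 p3 q1 q2 q3 r1 r2 r3 s1 s2 s3 where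
    "ip = ip_of (mat2 (vals p1 p2 p3) (vals q1 q2 q3) (vals r1 r2 r3) (vals s1 s2 s3))"
  using bimodule_map_A_eq_ip_of[OF assms] T2_cases by metis

lemma metric_eq_gB:
  assumes inv: "inverse_of g ip" and "central g" and "quantum_symmetric g"
  shows "g = gB"
proof -
  obtain a b c where g: "g = central_tensor a b 0 a 0 c"
    using assms(2,3) unfolding central_iff quantum_symmetric_def
    by (auto simp only: wedgeT_central_tensor_eq_0_iff)
  have "bimodule_map_A ip"
    using inv unfolding inverse_of_def by blast
  then obtain p1 p2 p3 q1 q2 q3 r1 r2 r3 s1 s2 s3 where
    ip: "ip = ip_of (mat2 (vals p1 p2 p3) (vals q1 q2 q3) (vals r1 r2 r3) (vals s1 s2 s3))"
    by (rule bimodule_map_A_cases)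
  have "(\<lambda>j. \<Sum>i\<in>UNIV. ip (tens \<eta> (lmul (g i j) (e i)))) = \<eta>" for \<eta>
    using inv unfolding inverse_of_def by blast
  \<comment> \<open>each of \<open>a, b, c\<close> ends up as a factor of a product equal to \<open>1\<close>\<close>
  from this[of "e I1"] this[of "e I2"] have "a = 1 \<and> b = 1 \<and> c = 1"
    unfolding ip g
    by (cases a; simp only: ix_fun_eq_iff sum_UNIV_ix central_tensor_def ip_of_def coord_simps
        bit_mult_eq_1_iff)
  then show ?thesis
    unfolding g central_tensor_def by (simp add: gB_mat2)
qed

definition gB_inv :: T2 where
  "gB_inv = mat2 (vals 1 0 1) (vals 0 1 1) (vals 0 1 1) (vals 1 1 0)"

lemma bimodule_map_A_ip_of_gB_inv: "bimodule_map_A (ip_of gB_inv)"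
  unfolding bimodule_map_A_def
proof (intro conjI allI)
  fix s t :: T2
  show "ip_of gB_inv (s + t) = ip_of gB_inv s + ip_of gB_inv t"
    by (simp add: ip_of_def sum_UNIV_ix algebra_simps)
next
  fix a and t :: T2
  show "ip_of gB_inv (lmulT a t) = a * ip_of gB_inv t"
    by (simp add: ip_of_def lmulT_def sum_UNIV_ix algebra_simps)
next
  fix a and t :: T2
  show "ip_of gB_inv (rmulT t a) = ip_of gB_inv t * a"
    by (cases a; cases t rule: T2_cases) (simp only: ip_of_def gB_inv_def sum_UNIV_ix coord_simps)
qed

lemma inverse_of_gB: "inverse_of gB (ip_of gB_inv)"
  unfolding inverse_of_def
proof (intro conjI allI bimodule_map_A_ip_of_gB_inv)
  fix \<eta> :: Om1
  obtain u v w u' v' w' where \<eta>: "\<eta> = case_ix (vals u v w) (vals u' v' w')"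
    by (rule Om1_cases)
  show "(\<lambda>j. \<Sum>i\<in>UNIV. ip_of gB_inv (tens \<eta> (lmul (gB i j) (e i)))) = \<eta>"
    unfolding \<eta> by (simp only: ix_fun_eq_iff sum_UNIV_ix ip_of_def gB_inv_def coord_simps)
  show "(\<Sum>i\<in>UNIV. \<Sum>j\<in>UNIV. lmul (gB i j) (rmul (e i) (ip_of gB_inv (tens (e j) \<eta>)))) = \<eta>"
    unfolding \<eta> by (simp only: sum_UNIV_ix ip_of_def gB_inv_def coord_simps)
qed

lemma inverse_of_gB_unique:
  assumes inv: "inverse_of gB ip"
  shows "ip = ip_of gB_inv"
proof -
  have "bimodule_map_A ip"
    using inv unfolding inverse_of_def by blast
  then obtain p1 p2 p3 q1 q2 q3 r1 r2 r3 s1 s2 s3 where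
    ip: "ip = ip_of (mat2 (vals p1 p2 p3) (vals q1 q2 q3) (vals r1 r2 r3) (vals s1 s2 s3))"
    by (rule bimodule_map_A_cases)
  have "(\<Sum>i\<in>UNIV. \<Sum>j\<in>UNIV. lmul (gB i j) (rmul (e i) (ip (tens (e j) \<eta>)))) = \<eta>" for \<eta>
    using inv unfolding inverse_of_def by blast
  from this[of "e I1"] this[of "e I2"]
  have "mat2 (vals p1 p2 p3) (vals q1 q2 q3) (vals r1 r2 r3) (vals s1 s2 s3) = gB_inv"
    unfolding ip gB_inv_def
    by (simp only: sum_UNIV_ix ip_of_def coord_simps) (auto simp del: add_bit_eq_xor simp: bit_add_eq_iff)
  then show ?thesis
    using ip by simp
qed

lemma quantum_dimension_gB: "ip_of gB_inv gB = 0"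
  by (simp only: ip_of_def gB_inv_def sum_UNIV_ix coord_simps)

section \<open>Connections\<close>

lemma T2_add_self [simp]: "(t::T2) + t = 0"
  by (intro ext) (simp only: plus_fun_apply zero_fun_apply A_add_self)

lemma T2_add_cancel_left: "(t::T2) + (t + u) = u"
  by (simp only: add.assoc[symmetric] T2_add_self add_0_left)

lemma T2_eq_add_iff: "(s::T2) = t + u \<longleftrightarrow> u = s + t"
  by (metis T2_add_cancel_left add.commute)

lemma lmulT_add_left: "lmulT (a + b) t = lmulT a t + lmulT b t"
  by (simp add: lmulT_def fun_eq_iff algebra_simps)

lemma lmulT_add_right: "lmulT a (s + t) = lmulT a s + lmulT a t"
  by (simp add: lmulT_def fun_eq_iff algebra_simps)

lemma lmulT_mult: "lmulT (a * b) t = lmulT a (lmulT b t)"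
  by (simp add: lmulT_def fun_eq_iff algebra_simps)

lemma lmulT_zero: "lmulT 0 t = 0" and lmulT_one: "lmulT 1 t = t"
  by (simp_all add: lmulT_def fun_eq_iff)

lemma tens_add_left: "tens (\<alpha> + \<beta>) \<gamma> = tens \<alpha> \<gamma> + tens \<beta> \<gamma>"
  by (simp add: tens_def fun_eq_iff sum_UNIV_ix algebra_simps)

lemma tens_add_right: "tens \<alpha> (\<beta> + \<gamma>) = tens \<alpha> \<beta> + tens \<alpha> \<gamma>"
proof -
  have "gen_r i (a + b) = gen_r i a + gen_r i b" for i a b
    by (cases a; cases b; cases i) (simp_all only: gen_r_vals vals_add case_ix_add bit_simps)
  then show ?thesis
    by (simp add: tens_def fun_eq_iff sum_UNIV_ix algebra_simps)
qed

lemma tens_zero_left: "tens 0 w = 0"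
  by (simp add: tens_def fun_eq_iff)

lemma d0_add: "d0 (a + b) = d0 a + d0 b"
  by (cases a; cases b) (simp only: d0_vals vals_add case_ix_add bit_simps)

lemma d0_zero: "d0 0 = 0" and d0_one: "d0 1 = 0"
  by (simp_all only: vals_consts d0_vals bit_simps zero_ix_fun)

lemma tens_d0_mult: "tens (d0 (a * c)) (e i) = lmulT a (tens (d0 c) (e i)) + tens (d0 a) (lmul c (e i))"
  by (cases a; cases c; cases i) (simp_all only: coord_simps)

lemma Om1_decompose: "w = lmul (w I1) (e I1) + lmul (w I2) (e I2)"
  by (simp only: ix_fun_eq_iff plus_fun_apply lmul_def e_def) simp

definition xy :: "ix \<Rightarrow> A" where "xy = case_ix xA yA"

lemma d0_xy: "d0 (xy i) = e i"
  by (cases i) (simp_all add: xy_def e_case d0_vals vals_consts)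

text \<open>The connection with \<open>\<nabla>\<omega>\<^sup>i = N i\<close>, and the braiding determined by the right Leibniz
  rule \<open>\<sigma>(\<omega>\<^sup>i \<otimes> d(xy j)) = \<nabla>(\<omega>\<^sup>i xy j) - (\<nabla>\<omega>\<^sup>i) xy j\<close> (in characteristic 2, \<open>- = +\<close>).\<close>
definition connection_of :: "(ix \<Rightarrow> T2) \<Rightarrow> Om1 \<Rightarrow> T2" where
  "connection_of N w = (\<Sum>i\<in>UNIV. lmulT (w i) (N i) + tens (d0 (w i)) (e i))"

definition braiding_of :: "(ix \<Rightarrow> T2) \<Rightarrow> T2 \<Rightarrow> T2" where
  "braiding_of N t = (\<Sum>i\<in>UNIV. \<Sum>j\<in>UNIV.
     lmulT (t i j) (connection_of N (rmul (e i) (xy j)) + rmulT (N i) (xy j)))"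

lemma connection_of_e: "connection_of N (e i) = N i"
  by (cases i) (simp_all only: connection_of_def sum_UNIV_ix e_case ix.case d0_zero d0_one
      lmulT_zero lmulT_one tens_zero_left add_0_left add_0_right)

lemma connection_of_add: "connection_of N (w + v) = connection_of N w + connection_of N v"
  by (simp add: connection_of_def sum_UNIV_ix lmulT_add_left d0_add tens_add_left algebra_simps)

lemma connection_of_lmul: "connection_of N (lmul a w) = lmulT a (connection_of N w) + tens (d0 a) w"
proof -
  have "tens (d0 a) w = tens (d0 a) (lmul (w I1) (e I1)) + tens (d0 a) (lmul (w I2) (e I2))"
    by (subst Om1_decompose[of w]) (rule tens_add_right)
  then show ?thesis
    by (simp add: connection_of_def sum_UNIV_ix lmul_def[of a] tens_d0_mult lmulT_mult
        lmulT_add_right algebra_simps)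
qed

lemma braiding_of_add: "braiding_of N (t + u) = braiding_of N t + braiding_of N u"
  by (simp add: braiding_of_def sum_UNIV_ix lmulT_add_left algebra_simps)

lemma braiding_of_lmulT: "braiding_of N (lmulT a t) = lmulT a (braiding_of N t)"
  by (simp add: braiding_of_def sum_UNIV_ix lmulT_def fun_eq_iff algebra_simps)

lemma bimodule_connection_eq:
  assumes "bimodule_connection nab sig"
  shows "nab = connection_of (\<lambda>i. nab (e i))" "sig = braiding_of (\<lambda>i. nab (e i))"
proof -
  define N where "N = (\<lambda>i. nab (e i))"
  have add: "\<And>w v. nab (w + v) = nab w + nab v"
    and left: "\<And>a w. nab (lmul a w) = lmulT a (nab w) + tens (d0 a) w"
    and sig_add: "\<And>t u. sig (t + u) = sig t + sig u"
    and sig_lmulT: "\<And>a t. sig (lmulT a t) = lmulT a (sig t)"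
    and right: "\<And>a w. nab (rmul w a) = rmulT (nab w) a + sig (tens w (d0 a))"
    using assms unfolding bimodule_connection_def bimodule_map_T_def by blast+
  have nab: "nab = connection_of N"
  proof
    fix w
    have "nab w = nab (lmul (w I1) (e I1)) + nab (lmul (w I2) (e I2))"
      by (subst Om1_decompose[of w]) (rule add)
    then show "nab w = connection_of N w"
      by (simp only: left connection_of_def sum_UNIV_ix add.assoc N_def)
  qed
  have sig_basis: "sig (tens (e i) (e j)) = nab (rmul (e i) (xy j)) + rmulT (N i) (xy j)" for i j
    using right[of "e i" "xy j"] unfolding N_def d0_xy by (rule T2_eq_add_iff[THEN iffD1])
  have sig: "sig = braiding_of N"
  proof
    fix t
    have "sig t = sig (\<Sum>i\<in>UNIV. \<Sum>j\<in>UNIV. lmulT (t i j) (tens (e i) (e j)))"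
      by (simp only: T2_decompose[of t, symmetric])
    also have "\<dots> = braiding_of N t"
      by (simp only: sum_UNIV_ix sig_add sig_lmulT sig_basis braiding_of_def nab[symmetric])
    finally show "sig t = braiding_of N t" .
  qed
  show "nab = connection_of (\<lambda>i. nab (e i))"
    using nab unfolding N_def .
  show "sig = braiding_of (\<lambda>i. nab (e i))"
    using sig unfolding N_def .
qed

lemma wedgeT_add: "wedgeT (s + t) = wedgeT s + wedgeT t"
  by (simp add: wedgeT_def sum_UNIV_ix algebra_simps)

lemma wedgeT_lmulT: "wedgeT (lmulT a t) = a * wedgeT t"
  by (simp add: wedgeT_def lmulT_def sum_UNIV_ix algebra_simps)

lemma wedgeT_zero: "wedgeT 0 = 0"
  by (simp add: wedgeT_def)

lemma d1_e: "d1 (e i) = 0"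
  by (cases i) (simp_all only: e_case d1_case d0_zero d0_one tens_zero_left wedgeT_zero add_0_left)

lemma wedgeT_connection_of:
  "wedgeT (connection_of N w) = w I1 * wedgeT (N I1) + w I2 * wedgeT (N I2) + d1 w"
  by (simp add: connection_of_def d1_def wedge_def sum_UNIV_ix wedgeT_add wedgeT_lmulT algebra_simps)

lemma torsion_free_connection_of_iff:
  "torsion_free (connection_of N) \<longleftrightarrow> (\<forall>i. wedgeT (N i) = 0)"
proof
  assume "torsion_free (connection_of N)"
  then have "wedgeT (connection_of N (e i)) = d1 (e i)" for i
    unfolding torsion_free_def by blast
  then show "\<forall>i. wedgeT (N i) = 0"
    by (simp add: connection_of_e d1_e)
next
  assume "\<forall>i. wedgeT (N i) = 0"
  then show "torsion_free (connection_of N)"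
    unfolding torsion_free_def wedgeT_connection_of by simp
qed

section \<open>The quantum Levi-Civita connections of gB\<close>

definition curved_christoffel :: "ix \<Rightarrow> T2" where
  "curved_christoffel = case_ix
     (mat2 (vals 1 0 0) (vals 1 0 0) (vals 1 0 0) (vals 1 0 1))
     (mat2 (vals 1 1 0) (vals 1 0 0) (vals 1 0 0) (vals 1 0 0))"

definition flat_christoffels :: "(ix \<Rightarrow> T2) set" where
  "flat_christoffels =
    {case_ix (mat2 (vals 1 0 1) (vals 1 0 0) (vals 1 1 1) (vals 1 1 1))
             (mat2 (vals 1 1 1) (vals 0 0 0) (vals 1 0 1) (vals 1 0 0)),
     case_ix (mat2 (vals 1 0 1) (vals 1 1 0) (vals 0 1 1) (vals 1 0 1))
             (mat2 (vals 1 1 0) (vals 0 1 1) (vals 1 0 1) (vals 1 1 0)),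
     case_ix (mat2 (vals 1 0 0) (vals 1 1 0) (vals 0 0 0) (vals 1 1 1))
             (mat2 (vals 1 1 1) (vals 1 1 1) (vals 1 0 0) (vals 1 1 0))}"

definition gB_christoffels :: "(ix \<Rightarrow> T2) set" where
  "gB_christoffels = insert curved_christoffel flat_christoffels"

lemmas gB_christoffels_defs = gB_christoffels_def curved_christoffel_def flat_christoffels_def

lemma torsion_free_christoffel_cases:
  assumes "\<forall>i. wedgeT (N i) = 0"
  obtains p1 p2 p3 q1 q2 q3 r1 s2 s3 p1' p2' p3' q1' q2' q3' r1' s2' s3' where
    "N = case_ix
       (mat2 (vals p1 p2 p3) (vals q1 q2 q3) (vals r1 (q2 + s2) (p3 + q3)) (vals p1 s2 s3))
       (mat2 (vals p1' p2' p3') (vals q1' q2' q3') (vals r1' (q2' + s2') (p3' + q3')) (vals p1' s2' s3'))"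
proof -
  obtain p1 p2 p3 q1 q2 q3 r1 r2 r3 s1 s2 s3 where
    N1: "N I1 = mat2 (vals p1 p2 p3) (vals q1 q2 q3) (vals r1 r2 r3) (vals s1 s2 s3)"
    by (rule T2_cases)
  obtain p1' p2' p3' q1' q2' q3' r1' r2' r3' s1' s2' s3' where
    N2: "N I2 = mat2 (vals p1' p2' p3') (vals q1' q2' q3') (vals r1' r2' r3') (vals s1' s2' s3')"
    by (rule T2_cases)
  show ?thesis
    using assms that unfolding all_ix N1 N2 wedgeT_mat2_eq_0_iff
    by (auto simp: ix_fun_eq_iff N1 N2 simp del: add_bit_eq_xor)
qed

lemma metric_compatible_imp_gB_christoffels:
  assumes "\<forall>i. wedgeT (N i) = 0" and "metric_compatible gB (connection_of N) (braiding_of N)"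
  shows "N \<in> gB_christoffels"
proof (cases rule: torsion_free_christoffel_cases[OF assms(1)])
  case (1 p1 p2 p3 q1 q2 q3 r1 s2 s3 p1' p2' p3' q1' q2' q3' r1' s2' s3')
  show ?thesis
    using assms(2) unfolding 1 gB_christoffels_defs insert_iff empty_iff
    apply (simp only: metric_compatible_def all_ix sum_UNIV_ix connection_of_def braiding_of_def
        xy_def coord_simps)
    apply (cases p1; (simp only: bit_simps simp_thms)?; cases p2; (simp only: bit_simps simp_thms)?;
        cases p3; (simp only: bit_simps simp_thms)?; cases q1; (simp only: bit_simps simp_thms)?;
        cases q2; (simp only: bit_simps simp_thms)?; cases q2'; (simp only: bit_simps simp_thms)?;
        cases r1; (simp only: bit_simps simp_thms)?; cases q3; (simp only: bit_simps simp_thms)?;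
        cases p2'; (simp only: bit_simps simp_thms)?; cases s3; (simp only: bit_simps simp_thms)?;
        cases s2'; (simp only: bit_simps simp_thms)?; cases s2; (simp only: bit_simps simp_thms)?;
        cases p1'; (simp only: bit_simps simp_thms)?; cases q1'; (simp only: bit_simps simp_thms)?;
        cases s3'; (simp only: bit_simps simp_thms)?; cases p3'; (simp only: bit_simps simp_thms)?;
        cases q3'; (simp only: bit_simps simp_thms)?; cases r1'; (simp only: bit_simps simp_thms)?)
    done
qed

lemma gB_christoffels_torsion_free:
  assumes "N \<in> gB_christoffels"
  shows "wedgeT (N i) = 0"
  using assms unfolding gB_christoffels_defs
  by (cases i; elim insertE emptyE; simp only: coord_simps)

lemma gB_christoffels_braiding_rmulT:
  assumes "N \<in> gB_christoffels"
  shows "braiding_of N (rmulT t a) = rmulT (braiding_of N t) a"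
  using assms unfolding gB_christoffels_defs
  by (cases t rule: T2_cases; cases a; elim insertE emptyE;
      simp only: braiding_of_def connection_of_def xy_def sum_UNIV_ix coord_simps)

lemma gB_christoffels_connection_rmul:
  assumes "N \<in> gB_christoffels"
  shows "connection_of N (rmul w a) = rmulT (connection_of N w) a + braiding_of N (tens w (d0 a))"
  using assms unfolding gB_christoffels_defs
  by (cases w rule: Om1_cases; cases a; elim insertE emptyE;
      simp only: braiding_of_def connection_of_def xy_def sum_UNIV_ix coord_simps)

lemma gB_christoffels_metric_compatible:
  assumes "N \<in> gB_christoffels"
  shows "metric_compatible gB (connection_of N) (braiding_of N)"
  using assms unfolding gB_christoffels_defs
  by (elim insertE emptyE; simp only: metric_compatible_def all_ix sum_UNIV_ix connection_of_def
      braiding_of_def xy_def coord_simps)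

definition qlc_of :: "(ix \<Rightarrow> T2) \<Rightarrow> (Om1 \<Rightarrow> T2) \<times> (T2 \<Rightarrow> T2)" where
  "qlc_of N = (connection_of N, braiding_of N)"

lemma inj_on_qlc_of: "inj_on qlc_of S"
proof (rule inj_onI)
  fix N M assume "qlc_of N = qlc_of M"
  then have "connection_of N (e i) = connection_of M (e i)" for i
    unfolding qlc_of_def by simp
  then show "N = M"
    unfolding connection_of_e by (rule ext)
qed

lemma qlc_of_mem_QLC_gB:
  assumes N: "N \<in> gB_christoffels"
  shows "qlc_of N \<in> QLC gB"
proof -
  have "bimodule_connection (connection_of N) (braiding_of N)"
    unfolding bimodule_connection_def bimodule_map_T_def
    using connection_of_add connection_of_lmul braiding_of_add braiding_of_lmulT
      gB_christoffels_braiding_rmulT[OF N] gB_christoffels_connection_rmul[OF N]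
    by blast
  moreover have "torsion_free (connection_of N)"
    using gB_christoffels_torsion_free[OF N] by (simp add: torsion_free_connection_of_iff)
  ultimately show ?thesis
    unfolding QLC_def qlc_of_def using gB_christoffels_metric_compatible[OF N] by blast
qed

lemma QLC_gB_eq: "QLC gB = qlc_of ` gB_christoffels"
proof
  show "QLC gB \<subseteq> qlc_of ` gB_christoffels"
  proof
    fix c assume c: "c \<in> QLC gB"
    then obtain nab sig where nab_sig: "c = (nab, sig)" and bc: "bimodule_connection nab sig"
      and tf: "torsion_free nab" and mc: "metric_compatible gB nab sig"
      unfolding QLC_def by blast
    define N where "N = (\<lambda>i. nab (e i))"
    have nab: "nab = connection_of N" and sig: "sig = braiding_of N"
      using bimodule_connection_eq[OF bc] unfolding N_def by blast+
    have "N \<in> gB_christoffels"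
      using tf mc unfolding nab sig torsion_free_connection_of_iff
      by (rule metric_compatible_imp_gB_christoffels)
    then show "c \<in> qlc_of ` gB_christoffels"
      unfolding nab_sig nab sig qlc_of_def by blast
  qed
  show "qlc_of ` gB_christoffels \<subseteq> QLC gB"
    using qlc_of_mem_QLC_gB by blast
qed

lemma card_gB_christoffels: "card gB_christoffels = 4"
  and card_flat_christoffels: "card flat_christoffels = 3"
  unfolding gB_christoffels_defs by (simp_all add: bit_zero_one_eq)

lemma curvature_curved_christoffel: "curvature (connection_of curved_christoffel) \<eta> = \<eta>"
  unfolding curved_christoffel_def
  by (cases \<eta> rule: Om1_cases, hypsubst)
    (simp only: curvature_def wedge_def ix_fun_eq_iff sum_UNIV_ix connection_of_def coord_simps)

lemma curvature_flat_christoffels: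
  assumes "N \<in> flat_christoffels"
  shows "curvature (connection_of N) \<eta> = 0"
  using assms unfolding flat_christoffels_def
  by (cases \<eta> rule: Om1_cases; elim insertE emptyE; hypsubst;
      simp only: curvature_def wedge_def ix_fun_eq_iff sum_UNIV_ix connection_of_def coord_simps)

lemma e_I1_neq_0: "e I1 \<noteq> 0"
  by (simp only: coord_simps not_False_eq_True)

lemma laplacian_gB_christoffels:
  assumes "N \<in> gB_christoffels"
  shows "ip_of gB_inv (connection_of N (d0 a)) = 0"
  using assms unfolding gB_christoffels_defs
  by (cases a; elim insertE emptyE; simp only: ip_of_def gB_inv_def connection_of_def sum_UNIV_ix
      coord_simps)

lemma flat_QLC_gB: "{c \<in> QLC gB. \<forall>\<eta>. curvature (fst c) \<eta> = 0} = qlc_of ` flat_christoffels"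
  using curvature_curved_christoffel curvature_flat_christoffels e_I1_neq_0
  unfolding QLC_gB_eq gB_christoffels_def qlc_of_def by fastforce

lemma curved_QLC_gB: "{c \<in> QLC gB. \<forall>\<eta>. curvature (fst c) \<eta> = \<eta>} = {qlc_of curved_christoffel}"
  using curvature_curved_christoffel curvature_flat_christoffels e_I1_neq_0
  unfolding QLC_gB_eq gB_christoffels_def qlc_of_def by fastforce

theorem mainTheorem7:
  shows "(\<forall>g. (invertible_metric g \<and> central g \<and> quantum_symmetric g) \<longleftrightarrow> g = gB)
    \<and> card (QLC gB) = 4
    \<and> card {c \<in> QLC gB. \<forall>\<eta>. curvature (fst c) \<eta> = 0} = 3
    \<and> card {c \<in> QLC gB. \<forall>\<eta>. curvature (fst c) \<eta> = \<eta>} = 1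
    \<and> (\<forall>ip. inverse_of gB ip \<longrightarrow> ip gB = 0)
    \<and> (\<forall>c \<in> QLC gB. \<forall>ip. inverse_of gB ip \<longrightarrow> (\<forall>a. laplacian ip (fst c) a = 0))"
proof (intro conjI allI ballI impI)
  fix g
  show "(invertible_metric g \<and> central g \<and> quantum_symmetric g) \<longleftrightarrow> g = gB"
    using metric_eq_gB inverse_of_gB central_gB quantum_symmetric_gB
    unfolding invertible_metric_def by blast
next
  show "card (QLC gB) = 4"
    unfolding QLC_gB_eq card_image[OF inj_on_qlc_of]
    by (rule card_gB_christoffels)
next
  show "card {c \<in> QLC gB. \<forall>\<eta>. curvature (fst c) \<eta> = 0} = 3"
    unfolding flat_QLC_gB card_image[OF inj_on_qlc_of]
    by (rule card_flat_christoffels)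
next
  show "card {c \<in> QLC gB. \<forall>\<eta>. curvature (fst c) \<eta> = \<eta>} = 1"
    unfolding curved_QLC_gB by simp
next
  fix ip assume "inverse_of gB ip"
  then show "ip gB = 0"
    using inverse_of_gB_unique quantum_dimension_gB by simp
next
  fix c ip a assume "c \<in> QLC gB" and "inverse_of gB ip"
  then show "laplacian ip (fst c) a = 0"
    using inverse_of_gB_unique laplacian_gB_christoffels
    unfolding QLC_gB_eq laplacian_def qlc_of_def by auto
qed

end
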